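(* Let $(X,\mathcal{B},\mu,T)$ be a probability measure-preserving system, $f\in L^2\cap L^\infty(X,\mu)$, and $\{n_i\}_{i\ge1}\subset\mathbb{N}$ a strictly increasing sequence. Suppose there exist $\alpha>0$ and $C>0$ such that $f_0=f-\int_X f\,d\mu$ satisfies $|\langle f_0\circ T^n,f_0\rangle|\le Cn^{-\alpha}$ for all $n\ge1$. Then for $\mu$-almost every $x\in X$, $$\frac1N\sum_{i=1}^N f(T^{n_i}x)\longrightarrow\int_X f\,d\mu\quad(N\to\infty).$$
   Context: $\langle g,h\rangle=\int_X g\overline{h}\,d\mu$. *)

theory Defs
  imports "HOL-Probability.Probability"
begin

definition mp_map :: "'a measure \<Rightarrow> ('a \<Rightarrow> 'a) \<Rightarrow> bool" where
  "mp_map M T \<longleftrightarrow> T \<in> M \<rightarrow>\<^sub>M M \<and> distr M M T = M"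

definition L2_inner :: "'a measure \<Rightarrow> ('a \<Rightarrow> complex) \<Rightarrow> ('a \<Rightarrow> complex) \<Rightarrow> complex" where
  "L2_inner M g h = (\<integral>x. g x * cnj (h x) \<partial>M)"

end

theory Submission
  imports Defs
begin

text \<open>
  Let \<open>g = f - \<integral>f\<close> and \<open>S N = (\<Sum>i=1..N. g \<circ> T ^^ n i)\<close>. Since \<open>n j - n i \<ge> j - i\<close>, every
  correlation of \<open>g \<circ> T ^^ n i\<close> and \<open>g \<circ> T ^^ n j\<close> with \<open>\<bar>i - j\<bar> \<ge> K\<close> is at most \<open>C K powr -\<alpha>\<close>,
  and the at most \<open>2 K N\<close> remaining ones are at most \<open>B\<^sup>2\<close> for an essential bound \<open>B\<close> of \<open>g\<close>.
  Hence \<open>\<integral>\<bar>S N\<bar>\<^sup>2 \<le> N (2 K B\<^sup>2 + N C K powr -\<alpha>)\<close>. Taking \<open>N = m ^ (r + 2)\<close> and \<open>K = m ^ r\<close> with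
  \<open>r \<alpha> > 1\<close> makes \<open>\<Sum>m. \<integral>\<bar>S N / N\<bar>\<^sup>2\<close> finite, so \<open>S N / N \<rightarrow> 0\<close> almost everywhere along this
  subsequence. Its consecutive terms have ratio tending to 1 and the summands are bounded, so the
  convergence extends to all \<open>N\<close>.
\<close>

lemma borel_measurable_cnj [measurable (raw)]:
  assumes "g \<in> borel_measurable M"
  shows "(\<lambda>x. cnj (g x :: complex)) \<in> borel_measurable M"
  by (rule borel_measurable_continuous_on[OF _ assms]) (intro continuous_intros)

lemma mp_map_funpow:
  assumes "mp_map M T"
  shows "mp_map M (T ^^ k)"
proof (induction k)
  case 0
  then show ?case by (simp add: mp_map_def id_def)
next
  case (Suc k)
  have T: "T \<in> M \<rightarrow>\<^sub>M M" "distr M M T = M" using assms by (auto simp: mp_map_def)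
  have Tk: "T ^^ k \<in> M \<rightarrow>\<^sub>M M" "distr M M (T ^^ k) = M" using Suc by (auto simp: mp_map_def)
  have "distr M M (T \<circ> T ^^ k) = distr (distr M M (T ^^ k)) M T"
    by (rule distr_distr[symmetric]) (use T Tk in auto)
  then show ?case using T Tk by (auto simp: mp_map_def comp_def intro: measurable_comp)
qed

lemma mp_map_integral_correlation_funpow:
  assumes "mp_map M T" and g[measurable]: "g \<in> borel_measurable M" and "a \<le> b"
  shows "(\<integral>x. g ((T ^^ b) x) * cnj (g ((T ^^ a) x)) \<partial>M) = L2_inner M (\<lambda>x. g ((T ^^ (b - a)) x)) g"
proof -
  have [measurable]: "T ^^ a \<in> M \<rightarrow>\<^sub>M M" and distr_Ta: "distr M M (T ^^ a) = M"
    using mp_map_funpow[OF assms(1)] by (auto simp: mp_map_def)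
  have "T ^^ (b - a) \<in> M \<rightarrow>\<^sub>M M"
    using mp_map_funpow[OF assms(1)] by (auto simp: mp_map_def)
  note [measurable] = measurable_compose[OF this g]
  have "(T ^^ b) x = (T ^^ (b - a)) ((T ^^ a) x)" for x
    using \<open>a \<le> b\<close> by (metis funpow_add comp_apply le_add_diff_inverse2)
  then have "(\<integral>x. g ((T ^^ b) x) * cnj (g ((T ^^ a) x)) \<partial>M)
      = (\<integral>x. (\<lambda>y. g ((T ^^ (b - a)) y) * cnj (g y)) ((T ^^ a) x) \<partial>M)"
    by simp
  also have "\<dots> = (\<integral>y. g ((T ^^ (b - a)) y) * cnj (g y) \<partial>distr M M (T ^^ a))"
    by (rule integral_distr[symmetric]) measurable
  finally show ?thesis unfolding distr_Ta L2_inner_def .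
qed

lemma mp_map_AE_funpow:
  assumes "mp_map M T" and "AE x in M. P x"
  shows "AE x in M. \<forall>k. P ((T ^^ k) x)"
proof -
  have "AE x in M. P ((T ^^ k) x)" for k
  proof -
    have Tk: "T ^^ k \<in> M \<rightarrow>\<^sub>M M" "distr M M (T ^^ k) = M"
      using mp_map_funpow[OF assms(1)] by (auto simp: mp_map_def)
    have "AE x in distr M M (T ^^ k). P x" unfolding Tk(2) by (rule assms(2))
    then show ?thesis by (rule AE_distrD[OF Tk(1)])
  qed
  then show ?thesis by (simp add: AE_all_countable)
qed

lemma increasing_index_gap:
  fixes n :: "nat \<Rightarrow> nat"
  assumes "\<forall>i\<ge>1. n i < n (Suc i)" "1 \<le> i" "i \<le> j"
  shows "n i + (j - i) \<le> n j"
  using assms(3)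
proof (induction j rule: dec_induct)
  case (step k)
  have "n k < n (Suc k)" using assms(1,2) step.hyps(1) by simp
  with step.IH step.hyps(1) show ?case by linarith
qed simp

lemma strict_mono_bracket:
  fixes s :: "nat \<Rightarrow> nat"
  assumes "strict_mono s" "s 0 \<le> N"
  shows "\<exists>m. s m \<le> N \<and> N < s (Suc m)"
proof -
  have "\<exists>m. N < s m"
    using strict_mono_imp_increasing[OF assms(1), of "Suc N"] Suc_le_lessD by blast
  define m where "m = (LEAST m. N < s m)"
  have "N < s m" unfolding m_def by (rule LeastI_ex) fact
  then have "m \<noteq> 0" using assms(2) by (intro notI) simp
  then obtain k where k: "m = Suc k" using not0_implies_Suc by blast
  have "\<not> N < s k" using not_less_Least[of k "\<lambda>m. N < s m"] k unfolding m_def by simp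
  then show ?thesis using \<open>N < s m\<close> k not_less by blast
qed

lemma LIMSEQ_Suc_power_ratio: "(\<lambda>m. real (Suc (Suc m) ^ q) / real (Suc m ^ q)) \<longlonglongrightarrow> 1"
proof -
  have "(\<lambda>m. 1 + 1 / real (Suc m)) \<longlonglongrightarrow> 1 + 0"
    by (intro tendsto_add tendsto_const LIMSEQ_Suc[OF lim_inverse_n'[unfolded inverse_eq_divide]])
  then have "(\<lambda>m. (1 + 1 / real (Suc m)) ^ q) \<longlonglongrightarrow> 1"
    using tendsto_power[of "\<lambda>m. 1 + 1 / real (Suc m)" 1 sequentially q] by simp
  moreover have "(1 + 1 / real (Suc m)) ^ q = real (Suc (Suc m) ^ q) / real (Suc m ^ q)" for m
  proof -
    have "1 + 1 / real (Suc m) = real (Suc (Suc m)) / real (Suc m)" by (simp add: field_simps)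
    then show ?thesis by (simp add: power_divide)
  qed
  ultimately show ?thesis by simp
qed

lemma LIMSEQ_averages_zero_from_power_subsequence:
  fixes a :: "nat \<Rightarrow> 'a::real_normed_field" and q :: nat
  assumes bound: "\<And>i. norm (a i) \<le> B"
    and lim: "(\<lambda>m. (\<Sum>i=1..Suc m ^ q. a i) / of_nat (Suc m ^ q)) \<longlonglongrightarrow> 0"
    and "q \<ge> 1"
  shows "(\<lambda>N. (\<Sum>i=1..N. a i) / of_nat N) \<longlonglongrightarrow> 0"
proof (rule LIMSEQ_I)
  fix r :: real assume "r > 0"
  define s where "s m = Suc m ^ q" for m
  define t where "t m = real (s (Suc m)) / real (s m)" for m
  have smono: "strict_mono s" unfolding s_def
    by (rule strict_monoI) (use \<open>q \<ge> 1\<close> in \<open>auto intro: power_strict_mono\<close>)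
  have s_pos: "real (s m) > 0" for m unfolding s_def by simp
  have "B \<ge> 0" using bound[of 0] norm_ge_zero[of "a 0"] by linarith
  have "t \<longlonglongrightarrow> 1" unfolding t_def s_def by (rule LIMSEQ_Suc_power_ratio)
  then have "(\<lambda>m. (t m - 1) * B) \<longlonglongrightarrow> 0"
    using tendsto_mult_right[OF tendsto_diff[OF _ tendsto_const], of t 1 sequentially 1 B] by simp
  from LIMSEQ_D[OF this, of "r/2"] obtain m1 where m1: "\<And>m. m \<ge> m1 \<Longrightarrow> \<bar>(t m - 1) * B\<bar> < r/2"
    using \<open>r > 0\<close> by auto
  obtain m2 where m2: "\<And>m. m \<ge> m2 \<Longrightarrow> norm ((\<Sum>i=1..s m. a i) / of_nat (s m)) < r/2"
    using LIMSEQ_D[OF lim, of "r/2"] \<open>r > 0\<close> unfolding s_def by fastforce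
  show "\<exists>N0. \<forall>N\<ge>N0. norm ((\<Sum>i=1..N. a i) / of_nat N - 0) < r"
  proof (intro exI allI impI)
    fix N assume N: "N \<ge> s (max m1 m2)"
    have "s 0 \<le> s (max m1 m2)" using smono by (simp add: strict_mono_less_eq)
    then obtain m where m: "s m \<le> N" "N < s (Suc m)"
      using strict_mono_bracket[OF smono, of N] N by auto
    have "max m1 m2 < Suc m" using N m(2) smono by (metis le_less_trans strict_mono_less)
    then have "m \<ge> m1" "m \<ge> m2" by auto
    have sub: "{1..s m} \<subseteq> {1..N}" using m by auto
    then have split: "(\<Sum>i=1..N. a i) = (\<Sum>i=1..s m. a i) + (\<Sum>i\<in>{1..N} - {1..s m}. a i)"
      using sum_diff[of "{1..N}" "{1..s m}" a] by simp
    have "norm (\<Sum>i\<in>{1..N} - {1..s m}. a i) \<le> real (N - s m) * B"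
      using sum_norm_le[of "{1..N} - {1..s m}" a "\<lambda>_. B"] bound card_Diff_subset[OF _ sub] by simp
    also have "\<dots> \<le> real (s (Suc m) - s m) * B"
      using m \<open>B \<ge> 0\<close> by (intro mult_right_mono) auto
    also have "\<dots> = (t m - 1) * B * real (s m)"
      using m s_pos[of m] by (simp add: t_def of_nat_diff field_simps)
    finally have tail: "norm (\<Sum>i\<in>{1..N} - {1..s m}. a i) \<le> (t m - 1) * B * real (s m)" .
    have "norm ((\<Sum>i=1..N. a i) / of_nat N) = norm (\<Sum>i=1..N. a i) / real N"
      by (simp add: norm_divide)
    also have "\<dots> \<le> (norm (\<Sum>i=1..s m. a i) + (t m - 1) * B * real (s m)) / real (s m)"
      unfolding split using m s_pos[of m] tail order_trans[OF norm_ge_zero tail]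
      by (intro frac_le order_trans[OF norm_triangle_ineq] add_left_mono) auto
    also have "\<dots> = norm ((\<Sum>i=1..s m. a i) / of_nat (s m)) + (t m - 1) * B"
      using s_pos[of m] by (simp add: norm_divide add_divide_distrib)
    also have "\<dots> < r/2 + r/2"
      using m1[OF \<open>m \<ge> m1\<close>] m2[OF \<open>m \<ge> m2\<close>] by (intro add_strict_mono) auto
    finally show "norm ((\<Sum>i=1..N. a i) / of_nat N - 0) < r" by simp
  qed
qed

lemma LIMSEQ_averages_of_centered:
  fixes a :: "nat \<Rightarrow> 'a::real_normed_field"
  assumes "(\<lambda>N. (\<Sum>i=1..N. a i - c) / of_nat N) \<longlonglongrightarrow> 0"
  shows "(\<lambda>N. (\<Sum>i=1..N. a i) / of_nat N) \<longlonglongrightarrow> c"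
proof -
  have "(\<Sum>i=1..N. a i - c) / of_nat N + c = (\<Sum>i=1..N. a i) / of_nat N" if "N \<ge> 1" for N
    using that by (simp add: sum_subtractf field_simps)
  then have "\<forall>\<^sub>F N in sequentially. (\<Sum>i=1..N. a i - c) / of_nat N + c = (\<Sum>i=1..N. a i) / of_nat N"
    by (auto simp: eventually_sequentially)
  moreover have "(\<lambda>N. (\<Sum>i=1..N. a i - c) / of_nat N + c) \<longlonglongrightarrow> c"
    using tendsto_add[OF assms tendsto_const, of c] by simp
  ultimately show ?thesis by (blast intro: Lim_transform_eventually)
qed

lemma card_band_le:
  fixes i K N :: nat
  shows "card {j\<in>{1..N}. i < j + K \<and> j < i + K} \<le> 2 * K"
proof -
  have "card {j\<in>{1..N}. i < j + K \<and> j < i + K} \<le> card {i + 1 - K ..< i + K}"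
    by (intro card_mono) auto
  then show ?thesis by simp
qed

lemma banded_double_sum_le:
  fixes \<phi> :: "nat \<Rightarrow> nat \<Rightarrow> real"
  assumes "\<And>i j. i \<in> {1..N} \<Longrightarrow> j \<in> {1..N} \<Longrightarrow> \<phi> i j \<le> (if i < j + K \<and> j < i + K then B else 0) + D"
    and "B \<ge> 0"
  shows "(\<Sum>i=1..N. \<Sum>j=1..N. \<phi> i j) \<le> real N * (2 * real K * B + real N * D)"
proof -
  have "(\<Sum>j=1..N. \<phi> i j) \<le> 2 * real K * B + real N * D" if "i \<in> {1..N}" for i
  proof -
    have "(\<Sum>j=1..N. \<phi> i j) \<le> (\<Sum>j=1..N. (if i < j + K \<and> j < i + K then B else 0) + D)"
      using assms(1) that by (intro sum_mono) auto
    also have "\<dots> = real (card {j\<in>{1..N}. i < j + K \<and> j < i + K}) * B + real N * D"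
      by (simp add: sum.distrib sum.If_cases Int_def)
    also have "\<dots> \<le> real (2 * K) * B + real N * D"
      using card_band_le[of N i K] \<open>B \<ge> 0\<close> by (intro add_right_mono mult_right_mono) auto
    finally show ?thesis by simp
  qed
  then have "(\<Sum>i=1..N. \<Sum>j=1..N. \<phi> i j) \<le> (\<Sum>i=1..N. 2 * real K * B + real N * D)"
    by (intro sum_mono)
  then show ?thesis by simp
qed

lemma integral_norm_sum_squared_le:
  fixes h :: "'i \<Rightarrow> 'a \<Rightarrow> complex"
  assumes "\<And>i j. integrable M (\<lambda>x. h i x * cnj (h j x))"
  shows "(\<integral>x. (norm (\<Sum>i\<in>I. h i x))\<^sup>2 \<partial>M) \<le> (\<Sum>i\<in>I. \<Sum>j\<in>I. norm (\<integral>x. h i x * cnj (h j x) \<partial>M))"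
proof -
  have "complex_of_real (\<integral>x. (norm (\<Sum>i\<in>I. h i x))\<^sup>2 \<partial>M)
      = (\<integral>x. (\<Sum>i\<in>I. h i x) * cnj (\<Sum>i\<in>I. h i x) \<partial>M)"
    by (simp only: integral_complex_of_real[symmetric] complex_norm_square)
  also have "\<dots> = (\<Sum>i\<in>I. \<Sum>j\<in>I. \<integral>x. h i x * cnj (h j x) \<partial>M)"
    by (simp add: sum_product assms)
  finally have expansion: "complex_of_real (\<integral>x. (norm (\<Sum>i\<in>I. h i x))\<^sup>2 \<partial>M)
      = (\<Sum>i\<in>I. \<Sum>j\<in>I. \<integral>x. h i x * cnj (h j x) \<partial>M)" .
  have "0 \<le> (\<integral>x. (norm (\<Sum>i\<in>I. h i x))\<^sup>2 \<partial>M)" by (intro integral_nonneg_AE) simp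
  then have "(\<integral>x. (norm (\<Sum>i\<in>I. h i x))\<^sup>2 \<partial>M)
      = norm (complex_of_real (\<integral>x. (norm (\<Sum>i\<in>I. h i x))\<^sup>2 \<partial>M))"
    by simp
  also have "\<dots> \<le> (\<Sum>i\<in>I. \<Sum>j\<in>I. norm (\<integral>x. h i x * cnj (h j x) \<partial>M))"
    unfolding expansion by (intro order_trans[OF norm_sum] sum_mono norm_sum)
  finally show ?thesis .
qed

lemma (in prob_space) second_moment_sum_le:
  fixes h :: "nat \<Rightarrow> 'a \<Rightarrow> complex"
  assumes h[measurable]: "\<And>i. h i \<in> borel_measurable M"
    and bound: "AE x in M. \<forall>i. norm (h i x) \<le> B"
    and decorrelation: "\<And>i j. 1 \<le> i \<Longrightarrow> 1 \<le> j \<Longrightarrow> i + K \<le> j \<or> j + K \<le> i \<Longrightarrow>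
                          norm (\<integral>x. h i x * cnj (h j x) \<partial>M) \<le> D"
    and "D \<ge> 0"
  shows "(\<integral>x. (norm (\<Sum>i=1..N. h i x))\<^sup>2 \<partial>M) \<le> real N * (2 * real K * B\<^sup>2 + real N * D)"
proof -
  have "AE x in M. 0 \<le> B" using bound by eventually_elim (use norm_ge_zero order_trans in blast)
  then have "B \<ge> 0" by simp
  have product_bound: "AE x in M. norm (h i x * cnj (h j x)) \<le> B\<^sup>2" for i j
    using bound by eventually_elim (use \<open>B \<ge> 0\<close> in \<open>simp add: norm_mult power2_eq_square mult_mono\<close>)
  have product_integrable: "integrable M (\<lambda>x. h i x * cnj (h j x))" for i j
    by (rule integrable_const_bound[OF product_bound]) measurable
  have correlation_le: "norm (\<integral>x. h i x * cnj (h j x) \<partial>M) \<le> B\<^sup>2" for i j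
  proof -
    have "norm (\<integral>x. h i x * cnj (h j x) \<partial>M) \<le> (\<integral>x. norm (h i x * cnj (h j x)) \<partial>M)"
      by (rule integral_norm_bound)
    also have "\<dots> \<le> (\<integral>x. B\<^sup>2 \<partial>M)"
      by (intro integral_mono_AE product_bound) (auto intro: product_integrable)
    finally show ?thesis by (simp add: prob_space)
  qed
  have "(\<integral>x. (norm (\<Sum>i=1..N. h i x))\<^sup>2 \<partial>M)
      \<le> (\<Sum>i=1..N. \<Sum>j=1..N. norm (\<integral>x. h i x * cnj (h j x) \<partial>M))"
    by (rule integral_norm_sum_squared_le[OF product_integrable])
  also have "\<dots> \<le> real N * (2 * real K * B\<^sup>2 + real N * D)"
  proof (rule banded_double_sum_le)
    fix i j assume "i \<in> {1..N}" "j \<in> {1..N}"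
    show "norm (\<integral>x. h i x * cnj (h j x) \<partial>M) \<le> (if i < j + K \<and> j < i + K then B\<^sup>2 else 0) + D"
    proof (cases "i < j + K \<and> j < i + K")
      case True
      then show ?thesis using correlation_le[of i j] \<open>D \<ge> 0\<close> by simp
    next
      case False
      then have "i + K \<le> j \<or> j + K \<le> i" by linarith
      then show ?thesis
        unfolding if_not_P[OF False] using decorrelation[of i j] \<open>i \<in> {1..N}\<close> \<open>j \<in> {1..N}\<close> by simp
    qed
  qed simp
  finally show ?thesis .
qed

lemma AE_LIMSEQ_zero_if_summable_second_moments:
  fixes Y :: "nat \<Rightarrow> 'a \<Rightarrow> 'b::real_normed_vector"
  assumes Y[measurable]: "\<And>m. Y m \<in> borel_measurable M"
    and integrable: "\<And>m. integrable M (\<lambda>x. (norm (Y m x))\<^sup>2)"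
    and summable: "summable (\<lambda>m. \<integral>x. (norm (Y m x))\<^sup>2 \<partial>M)"
  shows "AE x in M. (\<lambda>m. Y m x) \<longlonglongrightarrow> 0"
proof -
  have "(\<integral>\<^sup>+x. (\<Sum>m. ennreal ((norm (Y m x))\<^sup>2)) \<partial>M) = (\<Sum>m. \<integral>\<^sup>+x. ennreal ((norm (Y m x))\<^sup>2) \<partial>M)"
    by (rule nn_integral_suminf) simp
  also have "\<dots> = (\<Sum>m. ennreal (\<integral>x. (norm (Y m x))\<^sup>2 \<partial>M))"
    by (intro suminf_cong nn_integral_eq_integral integrable) simp
  also have "\<dots> \<noteq> \<top>"
    by (rule ennreal_suminf_neq_top[OF summable]) (simp add: integral_nonneg_AE)
  finally have "AE x in M. (\<Sum>m. ennreal ((norm (Y m x))\<^sup>2)) \<noteq> \<infinity>"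
    by (intro nn_integral_PInf_AE) simp_all
  then show ?thesis
  proof eventually_elim
    case (elim x)
    then have "summable (\<lambda>m. (norm (Y m x))\<^sup>2)"
      by (intro summable_suminf_not_top) simp_all
    then have "(\<lambda>m. (norm (Y m x))\<^sup>2) \<longlonglongrightarrow> 0" by (rule summable_LIMSEQ_zero)
    then have "(\<lambda>m. norm (Y m x)) \<longlonglongrightarrow> 0"
      using tendsto_real_sqrt[of "\<lambda>m. (norm (Y m x))\<^sup>2" 0] by simp
    then show ?case by (simp add: tendsto_norm_zero_iff)
  qed
qed

lemma summable_power_subsequence_moment_bound:
  fixes B C \<alpha> :: real and r :: nat
  assumes "1 < real r * \<alpha>"
  defines "N m \<equiv> real (Suc m ^ (r + 2))" and "K m \<equiv> real (Suc m ^ r)"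
  shows "summable (\<lambda>m. N m * (2 * K m * B + N m * (C * K m powr (-\<alpha>))) / (N m)\<^sup>2)"
proof -
  have bound_eq: "N m * (2 * K m * B + N m * (C * K m powr (-\<alpha>))) / (N m)\<^sup>2
      = 2 * B * real (Suc m) powr (-2) + C * real (Suc m) powr (-(real r * \<alpha>))" for m
  proof -
    define x :: real where "x = real (Suc m)"
    have "x > 0" unfolding x_def by simp
    have N: "N m = x ^ r * x\<^sup>2" and K: "K m = x ^ r"
      unfolding N_def K_def x_def by (simp_all only: power_add of_nat_mult of_nat_power)
    have K_powr: "(x ^ r) powr (-\<alpha>) = x powr (-(real r * \<alpha>))"
      using \<open>x > 0\<close> by (simp add: powr_realpow[symmetric] powr_powr)
    have x_powr: "x powr (-2) = 1 / x\<^sup>2"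
      using \<open>x > 0\<close> by (simp add: powr_minus powr_realpow[of x 2, simplified] divide_inverse)
    show ?thesis
      unfolding N K K_powr x_powr x_def[symmetric] using \<open>x > 0\<close> by (simp add: field_simps power2_eq_square)
  qed
  have summable_powr: "summable (\<lambda>m. real (Suc m) powr s)" if "s < -1" for s
    using that summable_iff_shift[of "\<lambda>m. real m powr s" 1] by (simp add: summable_real_powr_iff)
  show ?thesis
    unfolding bound_eq using assms(1) by (intro summable_add summable_mult summable_powr) auto
qed

lemma far_correlation_along_sequence_le:
  fixes g :: "'a \<Rightarrow> complex" and n :: "nat \<Rightarrow> nat"
  assumes T: "mp_map M T" and g[measurable]: "g \<in> borel_measurable M"
    and increasing: "\<forall>i\<ge>1. n i < n (Suc i)"
    and decay: "\<And>k. 1 \<le> k \<Longrightarrow> norm (L2_inner M (\<lambda>x. g ((T ^^ k) x)) g) \<le> C * real k powr (-\<alpha>)"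
    and "\<alpha> \<ge> 0" "C \<ge> 0" "1 \<le> K" "1 \<le> i" "1 \<le> j" and far: "i + K \<le> j \<or> j + K \<le> i"
  shows "norm (\<integral>x. g ((T ^^ n i) x) * cnj (g ((T ^^ n j) x)) \<partial>M) \<le> C * real K powr (-\<alpha>)"
proof -
  have ordered: "norm (\<integral>x. g ((T ^^ n b) x) * cnj (g ((T ^^ n a) x)) \<partial>M) \<le> C * real K powr (-\<alpha>)"
    if "1 \<le> a" "a + K \<le> b" for a b
  proof -
    have "n a + (b - a) \<le> n b" using increasing_index_gap[OF increasing, of a b] that by simp
    then have gap: "K \<le> n b - n a" "n a \<le> n b" using that by auto
    have "norm (\<integral>x. g ((T ^^ n b) x) * cnj (g ((T ^^ n a) x)) \<partial>M)
        = norm (L2_inner M (\<lambda>x. g ((T ^^ (n b - n a)) x)) g)"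
      using mp_map_integral_correlation_funpow[OF T g gap(2)] by simp
    also have "\<dots> \<le> C * real (n b - n a) powr (-\<alpha>)"
      using gap \<open>1 \<le> K\<close> by (intro decay) linarith
    also have "\<dots> \<le> C * real K powr (-\<alpha>)"
      using gap \<open>1 \<le> K\<close> \<open>\<alpha> \<ge> 0\<close> \<open>C \<ge> 0\<close> by (intro mult_left_mono powr_mono2') auto
    finally show ?thesis .
  qed
  show ?thesis
  proof (cases "j + K \<le> i")
    case True
    then show ?thesis using ordered[of j i] \<open>1 \<le> j\<close> by simp
  next
    case False
    have "(\<integral>x. g ((T ^^ n i) x) * cnj (g ((T ^^ n j) x)) \<partial>M)
        = cnj (\<integral>x. g ((T ^^ n j) x) * cnj (g ((T ^^ n i) x)) \<partial>M)"
      by (subst Bochner_Integration.integral_cnj[symmetric]) (simp add: mult.commute)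
    then show ?thesis using ordered[of i j] False far \<open>1 \<le> i\<close> by simp
  qed
qed

lemma (in prob_space) second_moment_sum_along_sequence_le:
  fixes g :: "'a \<Rightarrow> complex" and n :: "nat \<Rightarrow> nat"
  assumes T: "mp_map M T" and g[measurable]: "g \<in> borel_measurable M"
    and bound: "AE x in M. norm (g x) \<le> B"
    and increasing: "\<forall>i\<ge>1. n i < n (Suc i)" and "\<alpha> \<ge> 0"
    and decay: "\<And>k. 1 \<le> k \<Longrightarrow> norm (L2_inner M (\<lambda>x. g ((T ^^ k) x)) g) \<le> C * real k powr (-\<alpha>)"
    and "1 \<le> K"
  shows "(\<integral>x. (norm (\<Sum>i=1..N. g ((T ^^ n i) x)))\<^sup>2 \<partial>M)
    \<le> real N * (2 * real K * B\<^sup>2 + real N * (C * real K powr (-\<alpha>)))"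
proof (rule second_moment_sum_le)
  have "T ^^ k \<in> M \<rightarrow>\<^sub>M M" for k using mp_map_funpow[OF T] by (simp add: mp_map_def)
  then show "(\<lambda>x. g ((T ^^ n i) x)) \<in> borel_measurable M" for i
    by (rule measurable_compose) (rule g)
  show "AE x in M. \<forall>i. norm (g ((T ^^ n i) x)) \<le> B"
    using mp_map_AE_funpow[OF T bound] by eventually_elim blast
  have "C \<ge> 0" using order_trans[OF norm_ge_zero decay[of 1]] by simp
  then show "C * real K powr (-\<alpha>) \<ge> 0" by simp
  show "norm (\<integral>x. g ((T ^^ n i) x) * cnj (g ((T ^^ n j) x)) \<partial>M) \<le> C * real K powr (-\<alpha>)"
    if "1 \<le> i" "1 \<le> j" "i + K \<le> j \<or> j + K \<le> i" for i j
    by (rule far_correlation_along_sequence_le[OF T g increasing decay \<open>\<alpha> \<ge> 0\<close> \<open>C \<ge> 0\<close> \<open>1 \<le> K\<close> that])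
qed

lemma (in prob_space) summable_second_moments_along_power_subsequence:
  fixes g :: "'a \<Rightarrow> complex" and n :: "nat \<Rightarrow> nat"
  assumes T: "mp_map M T" and g[measurable]: "g \<in> borel_measurable M"
    and bound: "AE x in M. norm (g x) \<le> B"
    and increasing: "\<forall>i\<ge>1. n i < n (Suc i)" and "\<alpha> \<ge> 0"
    and decay: "\<And>k. 1 \<le> k \<Longrightarrow> norm (L2_inner M (\<lambda>x. g ((T ^^ k) x)) g) \<le> C * real k powr (-\<alpha>)"
    and r: "1 < real r * \<alpha>"
  shows "summable (\<lambda>m. \<integral>x. (norm ((\<Sum>i=1..Suc m ^ (r + 2). g ((T ^^ n i) x)) / of_nat (Suc m ^ (r + 2))))\<^sup>2 \<partial>M)"
proof -
  define N where "N m = Suc m ^ (r + 2)" for m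
  define K where "K m = Suc m ^ r" for m
  have "(\<integral>x. (norm ((\<Sum>i=1..N m. g ((T ^^ n i) x)) / of_nat (N m)))\<^sup>2 \<partial>M)
      \<le> real (N m) * (2 * real (K m) * B\<^sup>2 + real (N m) * (C * real (K m) powr (-\<alpha>))) / (real (N m))\<^sup>2" for m
  proof -
    have "1 \<le> K m" unfolding K_def by simp
    have "(\<integral>x. (norm ((\<Sum>i=1..N m. g ((T ^^ n i) x)) / of_nat (N m)))\<^sup>2 \<partial>M)
        = (\<integral>x. (norm (\<Sum>i=1..N m. g ((T ^^ n i) x)))\<^sup>2 \<partial>M) / (real (N m))\<^sup>2"
      by (simp add: norm_divide power_divide)
    moreover have "(\<integral>x. (norm (\<Sum>i=1..N m. g ((T ^^ n i) x)))\<^sup>2 \<partial>M)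
        \<le> real (N m) * (2 * real (K m) * B\<^sup>2 + real (N m) * (C * real (K m) powr (-\<alpha>)))"
      by (rule second_moment_sum_along_sequence_le[OF T g bound increasing \<open>\<alpha> \<ge> 0\<close> decay \<open>1 \<le> K m\<close>])
    ultimately show ?thesis by (metis divide_right_mono zero_le_power2)
  qed
  then show ?thesis
    unfolding N_def[symmetric]
    by (intro summable_comparison_test'[OF summable_power_subsequence_moment_bound[OF r, of "B\<^sup>2" C, folded N_def K_def]])
      (simp add: integral_nonneg_AE)
qed

lemma (in prob_space) AE_averages_along_sequence_tendsto_zero:
  fixes g :: "'a \<Rightarrow> complex" and n :: "nat \<Rightarrow> nat"
  assumes T: "mp_map M T" and g[measurable]: "g \<in> borel_measurable M"
    and bound: "AE x in M. norm (g x) \<le> B"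
    and increasing: "\<forall>i\<ge>1. n i < n (Suc i)" and "\<alpha> > 0"
    and decay: "\<And>k. 1 \<le> k \<Longrightarrow> norm (L2_inner M (\<lambda>x. g ((T ^^ k) x)) g) \<le> C * real k powr (-\<alpha>)"
  shows "AE x in M. (\<lambda>N. (\<Sum>i=1..N. g ((T ^^ n i) x)) / of_nat N) \<longlonglongrightarrow> 0"
proof -
  define h where "h i x = g ((T ^^ n i) x)" for i x
  have Tk[measurable]: "T ^^ k \<in> M \<rightarrow>\<^sub>M M" for k
    using mp_map_funpow[OF T] by (simp add: mp_map_def)
  have h[measurable]: "h i \<in> borel_measurable M" for i unfolding h_def by measurable
  have h_bound: "AE x in M. \<forall>i. norm (h i x) \<le> B"
    using mp_map_AE_funpow[OF T bound] unfolding h_def by eventually_elim blast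
  obtain r :: nat where r: "1 < real r * \<alpha>" using ex_less_of_nat_mult[OF \<open>\<alpha> > 0\<close>] by blast
  define S where "S N x = (\<Sum>i=1..N. h i x)" for N x
  define N where "N m = Suc m ^ (r + 2)" for m
  define Y where "Y m x = S (N m) x / of_nat (N m)" for m x
  have Y[measurable]: "Y m \<in> borel_measurable M" for m unfolding Y_def S_def by measurable
  have Y_bound: "AE x in M. norm (Y m x) \<le> B" for m
    using h_bound
  proof eventually_elim
    case (elim x)
    have "norm (S (N m) x) \<le> real (N m) * B"
      unfolding S_def using sum_norm_le[of "{1..N m}" "\<lambda>i. h i x" "\<lambda>_. B"] elim by simp
    moreover have "N m > 0" unfolding N_def by simp
    ultimately show ?case unfolding Y_def by (simp add: norm_divide divide_le_eq mult.commute)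
  qed
  have Y_integrable: "integrable M (\<lambda>x. (norm (Y m x))\<^sup>2)" for m
  proof (rule integrable_const_bound[where B = "B\<^sup>2"])
    show "AE x in M. norm ((norm (Y m x))\<^sup>2) \<le> B\<^sup>2"
      using Y_bound[of m] by eventually_elim (simp add: power_mono)
  qed measurable
  have "summable (\<lambda>m. \<integral>x. (norm (Y m x))\<^sup>2 \<partial>M)"
    using summable_second_moments_along_power_subsequence[OF T g bound increasing _ decay r, folded N_def]
      \<open>\<alpha> > 0\<close> unfolding Y_def S_def h_def by simp
  then have "AE x in M. (\<lambda>m. Y m x) \<longlonglongrightarrow> 0"
    by (intro AE_LIMSEQ_zero_if_summable_second_moments Y Y_integrable)
  with h_bound show ?thesis
  proof eventually_elim
    case (elim x)
    have lim: "(\<lambda>m. (\<Sum>i=1..Suc m ^ (r + 2). h i x) / of_nat (Suc m ^ (r + 2))) \<longlonglongrightarrow> 0"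
      using elim(2) unfolding Y_def S_def N_def .
    have "(\<lambda>N. (\<Sum>i=1..N. h i x) / of_nat N) \<longlonglongrightarrow> 0"
      by (rule LIMSEQ_averages_zero_from_power_subsequence[OF _ lim]) (use elim(1) in blast, simp)
    then show ?case unfolding h_def .
  qed
qed

theorem mainTheorem5:
  fixes M :: "'a measure" and T :: "'a \<Rightarrow> 'a" and f :: "'a \<Rightarrow> complex"
    and n :: "nat \<Rightarrow> nat" and \<alpha> C :: real
  assumes "prob_space M"
    and "mp_map M T"
    and "f \<in> borel_measurable M"
    and "integrable M (\<lambda>x. (norm (f x))\<^sup>2)"
    and "\<exists>B. AE x in M. norm (f x) \<le> B"
    and "\<forall>i\<ge>1. n i < n (Suc i)"
    and "\<alpha> > 0" and "C > 0"
    and "\<forall>k::nat\<ge>1. norm (L2_inner M (\<lambda>x. f ((T ^^ k) x) - (\<integral>y. f y \<partial>M))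
                                    (\<lambda>x. f x - (\<integral>y. f y \<partial>M))) \<le> C * real k powr (-\<alpha>)"
  shows "AE x in M. (\<lambda>N. (\<Sum>i=1..N. f ((T ^^ n i) x)) / of_nat N) \<longlonglongrightarrow> (\<integral>y. f y \<partial>M)"
proof -
  interpret prob_space M by fact
  define c where "c = (\<integral>y. f y \<partial>M)"
  obtain B where "AE x in M. norm (f x) \<le> B" using assms(5) by blast
  then have centered_bound: "AE x in M. norm (f x - c) \<le> B + norm c"
    by eventually_elim (metis add_mono norm_triangle_ineq4 order_trans order_refl)
  have "AE x in M. (\<lambda>N. (\<Sum>i=1..N. f ((T ^^ n i) x) - c) / of_nat N) \<longlonglongrightarrow> 0"
    using AE_averages_along_sequence_tendsto_zero[where g = "\<lambda>x. f x - c" and C = C,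
        OF assms(2) _ centered_bound assms(6,7)] assms(3,9)
    by (auto simp: c_def)
  then show ?thesis
    unfolding c_def by eventually_elim (rule LIMSEQ_averages_of_centered)
qed

end
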